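(* Let $U^{(n)}$ be uniformly distributed on $\{1,\dots,n\}$ and, for $1\le m<n$, put $\widetilde U^{(n,m)}:=\prod_{m<p\le n,\ p\ \text{prime}}p^{\mathbbm{1}_{\{\lambda_p(U^{(n)})\ge1\}}}$. Assume that $m_n>n^{1/2}$ for all sufficiently large $n$ and $m_n=o(n)$ as $n\to\infty$. Then $${\rm Var}\bigl(\log\widetilde U^{(n,m_n)}\bigr)\sim 2^{-1}(\log n-\log m_n)(3\log m_n-\log n),\qquad n\to\infty.$$
   Context: For a prime $p$ and $k\in\mathbb{N}$, $\lambda_p(k)$ is the exponent of $p$ in the prime factorization of $k$. $a_n\sim b_n$ means $a_n/b_n\to1$. *)

theory Defs
  imports "HOL-Probability.Probability" "HOL-Library.Landau_Symbols" "HOL-Computational_Algebra.Primes"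
begin

text \<open>The p-adic valuation lambda_p(k) is the library's multiplicity p k.
  Utilde n m k = product over primes p with m < p <= n of p^(indicator of lambda_p(k) >= 1).\<close>
definition Utilde :: "nat \<Rightarrow> nat \<Rightarrow> nat \<Rightarrow> nat" where
  "Utilde n m k = (\<Prod>p\<in>{p. prime p \<and> m < p \<and> p \<le> n}.
      p ^ (if multiplicity p k \<ge> 1 then 1 else 0))"

end

theory Submission
  imports Defs
begin

text \<open>
  Let Q be the set of primes in (m, n], L = ln n and l = ln m. For 1 \<le> k \<le> n,
  ln (Utilde n m k) is the sum of ln p over the p \<in> Q dividing k, and since n < m^2 no k \<le> n
  is divisible by two primes of Q, so its square is the sum of (ln p)^2 over the same p.
  Averaging over k, the first two moments are the sums of ln p * (n div p) / n and
  (ln p)^2 * (n div p) / n over p \<in> Q. Replacing n div p by n / p costs O(1) resp. O(L) by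
  Chebyshev's bound on the sum of ln p over primes p \<le> n, and Mertens' estimates
  (sum of ln p / p over p \<le> x is ln x + O(1), hence by summation by parts the sum of
  (ln p)^2 / p is (ln x)^2 / 2 + O(ln x)) give the moments L - l + O(1) and (L^2 - l^2)/2 + O(L).
  So the variance is (L - l)(3 l - L)/2 + O(L); the main term is at least (L - l) L / 4
  because 2 l > L, so the relative error is O(1 / (L - l)), which tends to 0 as m = o(n).
\<close>

section \<open>Chebyshev's bound\<close>

lemma prod_primes_dvd:
  fixes A :: "nat set"
  assumes "finite A" "\<And>p. p \<in> A \<Longrightarrow> prime p \<and> p dvd N"
  shows "\<Prod>A dvd N"
  using assms
proof (induction A rule: finite_induct)
  case (insert q A)
  have "coprime q (\<Prod>A)"
    using insert by (intro prod_coprime_right) (metis insertCI primes_coprime)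
  with insert show ?case by (simp add: divides_mult)
qed simp

lemma binomial_middle_le_4_power: "(2*k+1) choose k \<le> 4^k"
proof -
  have "2 * ((2*k+1) choose k) = ((2*k+1) choose k) + ((2*k+1) choose (k+1))"
    using binomial_symmetric[of k "2*k+1"] by simp
  also have "\<dots> = (\<Sum>i\<in>{k, k+1}. (2*k+1) choose i)" by simp
  also have "\<dots> \<le> (\<Sum>i\<le>2*k+1. (2*k+1) choose i)" by (rule sum_mono2) auto
  also have "\<dots> = 2 * 4^k" by (simp only: choose_row_sum) (simp add: power_mult)
  finally show ?thesis by simp
qed

lemma prime_dvd_binomial_middle:
  assumes "prime p" "k+1 < p" "p \<le> 2*k+1"
  shows "p dvd (2*k+1) choose k"
proof -
  have "fact k * fact (k+1) * ((2*k+1) choose k) = (fact (2*k+1) :: nat)"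
    using binomial_fact_lemma[of k "2*k+1"] by (simp add: Suc_diff_le)
  moreover have "p dvd (fact (2*k+1) :: nat)"
    using assms prime_ge_1_nat by (intro dvd_fact) auto
  ultimately have "p dvd fact k * fact (k+1) * ((2*k+1) choose k)" by simp
  moreover have "\<not> p dvd fact k * fact (k+1)"
    using assms by (simp only: prime_dvd_mult_iff prime_dvd_fact_iff) simp
  ultimately show ?thesis using assms(1) by (simp add: prime_dvd_mult_iff)
qed

lemma prod_primes_between_le_4_power: "\<Prod>{p. prime p \<and> k+1 < p \<and> p \<le> 2*k+1} \<le> (4::nat) ^ k"
proof -
  have fin: "finite {p. prime p \<and> k+1 < p \<and> p \<le> 2*k+1}"
    by (rule finite_subset[of _ "{..2*k+1}"]) auto
  have "\<Prod>{p. prime p \<and> k+1 < p \<and> p \<le> 2*k+1} dvd (2*k+1) choose k"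
    using fin prime_dvd_binomial_middle by (intro prod_primes_dvd) auto
  then have "\<Prod>{p. prime p \<and> k+1 < p \<and> p \<le> 2*k+1} \<le> (2*k+1) choose k"
    by (rule dvd_imp_le) simp
  then show ?thesis using binomial_middle_le_4_power le_trans by blast
qed

lemma prod_primes_le_4_power: "\<Prod>{p. prime p \<and> p \<le> n} \<le> (4::nat) ^ n"
proof (induction n rule: less_induct)
  case (less n)
  have "n \<le> 2 \<or> (n > 2 \<and> even n) \<or> (\<exists>k. n = 2*k+1 \<and> k \<ge> 1)" by presburger
  then consider "n \<le> 2" | "n > 2" "even n" | k where "n = 2*k+1" "k \<ge> 1" by blast
  then show ?case
  proof cases
    case 1
    then have "{p. prime p \<and> p \<le> n} = (if n = 2 then {2} else {})"
      by (auto dest: prime_ge_2_nat)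
    then show ?thesis by auto
  next
    case 2
    then have "\<not> prime n" using prime_odd_nat by auto
    then have "p \<le> n \<longleftrightarrow> p \<le> n - 1" if "prime p" for p
      using that by (cases "p = n") auto
    then have "{p. prime p \<and> p \<le> n} = {p. prime p \<and> p \<le> n - 1}"
      by blast
    then show ?thesis
      using less[of "n - 1"] 2 by (simp add: le_trans[OF _ power_increasing])
  next
    case 3
    have "{p. prime p \<and> p \<le> n} = {p. prime p \<and> p \<le> k+1} \<union> {p. prime p \<and> k+1 < p \<and> p \<le> 2*k+1}"
      using 3 by auto
    then have "\<Prod>{p. prime p \<and> p \<le> n}
        = \<Prod>{p. prime p \<and> p \<le> k+1} * \<Prod>{p. prime p \<and> k+1 < p \<and> p \<le> 2*k+1}"
      by (simp only:) (rule prod.union_disjoint; auto intro: finite_subset[of _ "{..2*k+1}"])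
    also have "\<dots> \<le> 4^(k+1) * 4^k"
      using less[of "k+1"] 3 prod_primes_between_le_4_power[of k] by (intro mult_le_mono) simp_all
    also have "\<dots> = 4^n" using 3 by (simp flip: power_add)
    finally show ?thesis .
  qed
qed

lemma sum_ln_primes_le: "(\<Sum>p | prime p \<and> p \<le> n. ln (real p)) \<le> ln 4 * real n"
proof -
  have "(\<Sum>p | prime p \<and> p \<le> n. ln (real p)) = ln (real (\<Prod>{p. prime p \<and> p \<le> n}))"
    unfolding of_nat_prod by (subst ln_prod) (auto dest: prime_gt_0_nat)
  also have "\<dots> \<le> ln (real ((4::nat) ^ n))"
  proof (rule ln_mono)
    show "real (\<Prod>{p. prime p \<and> p \<le> n}) \<le> real ((4::nat) ^ n)"
      using prod_primes_le_4_power[of n] by (simp only: of_nat_le_iff)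
    show "0 < real (\<Prod>{p. prime p \<and> p \<le> n})"
      unfolding of_nat_0_less_iff by (rule prod_pos) (auto dest: prime_gt_0_nat)
  qed
  also have "\<dots> = ln 4 * real n" by (simp add: ln_realpow)
  finally show ?thesis .
qed

section \<open>Legendre's formula\<close>

lemma real_div_minus_one_le: "real n / real d - 1 \<le> real (n div d)"
proof -
  have "real (n div d) = of_int \<lfloor>real n / real d\<rfloor>"
    by (simp add: floor_divide_of_nat_eq)
  then show ?thesis using real_of_int_floor_gt_diff_one[of "real n / real d"] by linarith
qed

lemma sum_if_dvd_atLeastAtMost:
  assumes "d > 0"
  shows "(\<Sum>k\<in>{1..n}. if d dvd k then c else 0) = of_nat (n div d) * (c :: 'a :: comm_semiring_1)"
proof -
  have "{k\<in>{1..n}. d dvd k} = (\<lambda>j. d * j) ` {1..n div d}"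
    using assms by (auto simp: less_eq_div_iff_mult_less_eq mult.commute elim!: dvdE)
  moreover have "inj_on (\<lambda>j. d * j) {1..n div d}" using assms by (simp add: inj_on_def)
  ultimately have "card {k\<in>{1..n}. d dvd k} = n div d" by (simp add: card_image)
  then show ?thesis by (simp add: sum.If_cases Int_def conj_commute)
qed

lemma ln_eq_sum_multiplicity:
  assumes "x > 0" "finite A" "prime_factors x \<subseteq> A" "\<And>p. p \<in> A \<Longrightarrow> prime p"
  shows "ln (real x) = (\<Sum>p\<in>A. real (multiplicity p x) * ln (real p))"
proof -
  have "ln (real x) = ln (\<Prod>p\<in>prime_factors x. real p ^ multiplicity p x)"
    using prod_prime_factors[of x] assms by (simp flip: of_nat_power of_nat_prod)
  also have "\<dots> = (\<Sum>p\<in>prime_factors x. real (multiplicity p x) * ln (real p))"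
    by (subst ln_prod) (auto simp: ln_realpow dest: in_prime_factors_imp_prime prime_gt_0_nat)
  also have "\<dots> = (\<Sum>p\<in>A. real (multiplicity p x) * ln (real p))"
    using assms by (intro sum.mono_neutral_left) (auto simp: prime_factors_multiplicity)
  finally show ?thesis .
qed

lemma ln_fact_eq_sum_multiplicity:
  "ln (fact n) = (\<Sum>p | prime p \<and> p \<le> n. real (multiplicity p (fact n :: nat)) * ln (real p))"
proof -
  have "prime_factors (fact n :: nat) \<subseteq> {p. prime p \<and> p \<le> n}"
    by (auto simp: in_prime_factors_iff prime_dvd_fact_iff)
  then have "ln (real (fact n :: nat)) = (\<Sum>p | prime p \<and> p \<le> n. real (multiplicity p (fact n :: nat)) * ln (real p))"
    by (intro ln_eq_sum_multiplicity) auto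
  then show ?thesis by (simp only: of_nat_fact)
qed

lemma multiplicity_le_self:
  assumes "prime p" "k > 0"
  shows "multiplicity p k \<le> k"
proof -
  have "multiplicity p k < 2 ^ multiplicity p k" by (rule less_exp)
  also have "\<dots> \<le> p ^ multiplicity p k" using assms prime_ge_2_nat by (intro power_mono) auto
  also have "\<dots> \<le> k" using assms by (intro dvd_imp_le multiplicity_dvd) auto
  finally show ?thesis by simp
qed

lemma legendre_formula:
  assumes "prime p"
  shows "multiplicity p (fact n :: nat) = (\<Sum>j\<in>{1..n}. n div p ^ j)"
proof -
  have count: "multiplicity p k = (\<Sum>j\<in>{1..n}. if p ^ j dvd k then 1 else 0)" if "k \<in> {1..n}" for k
  proof -
    have "p ^ j dvd k \<longleftrightarrow> j \<le> multiplicity p k" for j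
      using that assms by (intro power_dvd_iff_le_multiplicity) auto
    then have "{j\<in>{1..n}. p ^ j dvd k} = {j\<in>{1..n}. j \<le> multiplicity p k}"
      by blast
    also have "\<dots> = {1..multiplicity p k}"
      using that multiplicity_le_self[OF assms, of k] by auto
    finally show ?thesis by (simp add: sum.If_cases Int_def conj_commute)
  qed
  have "multiplicity p (fact n :: nat) = (\<Sum>k\<in>{1..n}. multiplicity p k)"
    unfolding fact_prod of_nat_id using assms by (subst prime_elem_multiplicity_prod_distrib) auto
  also have "\<dots> = (\<Sum>k\<in>{1..n}. \<Sum>j\<in>{1..n}. if p ^ j dvd k then 1 else 0)"
    using count by simp
  also have "\<dots> = (\<Sum>j\<in>{1..n}. \<Sum>k\<in>{1..n}. if p ^ j dvd k then 1 else 0)"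
    by (rule sum.swap)
  also have "\<dots> = (\<Sum>j\<in>{1..n}. n div p ^ j)"
    using sum_if_dvd_atLeastAtMost[where d = "p ^ _" and c = "1::nat"] prime_gt_0_nat[OF assms] by simp
  finally show ?thesis .
qed

lemma multiplicity_fact_ge:
  assumes "prime p"
  shows "n div p \<le> multiplicity p (fact n :: nat)"
proof (cases "n = 0")
  case False
  then have "n div p ^ 1 \<le> (\<Sum>j\<in>{1..n}. n div p ^ j)"
    by (intro member_le_sum) auto
  then show ?thesis by (simp add: legendre_formula[OF assms])
qed simp

lemma multiplicity_fact_le:
  assumes "prime p"
  shows "real (multiplicity p (fact n :: nat)) \<le> real n / (real p - 1)"
proof -
  define x where "x = 1 / real p"
  have p: "real p > 1" using prime_gt_1_nat[OF assms] by simp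
  then have x: "0 \<le> x" "x < 1" by (auto simp: x_def)
  have "real (multiplicity p (fact n :: nat)) = (\<Sum>j\<in>{1..n}. real (n div p ^ j))"
    by (simp add: legendre_formula[OF assms])
  also have "\<dots> \<le> (\<Sum>j\<in>{1..n}. real n / real (p ^ j))"
    by (intro sum_mono of_nat_div_le_of_nat)
  also have "\<dots> = real n * x * (\<Sum>j<n. x ^ j)"
    by (simp add: sum.atLeast1_atMost_eq sum_distrib_left x_def power_one_over field_simps)
  also have "\<dots> = real n * x * ((1 - x ^ n) / (1 - x))"
    using x by (simp add: sum_gp_strict)
  also have "\<dots> \<le> real n * x * (1 / (1 - x))"
    using x by (intro mult_left_mono divide_right_mono) auto
  also have "\<dots> = real n / (real p - 1)"
    using p by (simp add: x_def field_simps)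
  finally show ?thesis .
qed

lemma ln_fact_le: "ln (fact n) \<le> real n * ln (real n)"
proof (cases "n = 0")
  case False
  have "ln (fact n) \<le> ln (real n ^ n)"
    using fact_le_power[of n, where 'a=real] by (intro ln_mono) auto
  then show ?thesis using False by (simp add: ln_realpow)
qed simp

lemma ln_fact_ge: "real n * ln (real n) - real n \<le> ln (fact n)"
proof (cases "n = 0")
  case False
  have "real n ^ n /\<^sub>R fact n \<le> exp (real n)"
    using sum_le_suminf[OF sums_summable[OF exp_converges], of "{n}" "real n"]
    by (simp add: sums_unique[OF exp_converges])
  then have "ln (real n ^ n / fact n) \<le> ln (exp (real n))"
    using False by (intro ln_mono) (auto simp: divide_inverse mult.commute)
  then show ?thesis using False by (simp add: ln_div ln_realpow)
qed simp

section \<open>Mertens' estimates\<close>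

definition mertens :: "nat \<Rightarrow> real" where
  "mertens n = (\<Sum>p | prime p \<and> p \<le> n. ln (real p) / real p)"

lemma mertens_le:
  assumes "n \<ge> 1"
  shows "mertens n \<le> ln (real n) + ln 4"
proof -
  have "real n * mertens n - (\<Sum>p | prime p \<and> p \<le> n. ln (real p))
      = (\<Sum>p | prime p \<and> p \<le> n. ln (real p) * (real n / real p - 1))"
    by (simp add: mertens_def sum_distrib_left sum_subtractf algebra_simps)
  also have "\<dots> \<le> (\<Sum>p | prime p \<and> p \<le> n. ln (real p) * real (multiplicity p (fact n :: nat)))"
  proof (intro sum_mono mult_left_mono)
    fix p assume "p \<in> {p. prime p \<and> p \<le> n}"
    then have p: "prime p" by simp
    then show "0 \<le> ln (real p)" using prime_ge_1_nat by simp
    show "real n / real p - 1 \<le> real (multiplicity p (fact n :: nat))"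
      using real_div_minus_one_le[of n p] multiplicity_fact_ge[OF p, of n] by linarith
  qed
  also have "\<dots> = ln (fact n)"
    by (simp add: ln_fact_eq_sum_multiplicity mult.commute)
  also have "\<dots> \<le> real n * ln (real n)" by (rule ln_fact_le)
  finally have "real n * mertens n \<le> real n * (ln (real n) + ln 4)"
    using sum_ln_primes_le[of n] by (simp add: algebra_simps)
  then show ?thesis using assms by simp
qed

lemma ln_div_le_powr:
  fixes x :: real
  assumes "x \<ge> 2"
  shows "ln x / (x * (x - 1)) \<le> 4 * x powr (-3/2)"
proof -
  have "ln x = 2 * ln (sqrt x)" using assms by (simp add: ln_sqrt)
  also have "\<dots> \<le> 2 * sqrt x" using assms by (intro mult_left_mono ln_le_minus_one[THEN order_trans]) auto
  finally have "ln x / (x * (x - 1)) \<le> 2 * sqrt x / (x ^ 2 / 2)"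
    using assms by (intro frac_le) (auto simp: power2_eq_square field_simps)
  also have "\<dots> = 4 * (x powr (1/2) / x powr 2)"
    using assms by (simp add: powr_half_sqrt)
  also have "\<dots> = 4 * x powr (1/2 - 2)"
    by (simp only: powr_diff)
  also have "\<dots> = 4 * x powr (-3/2)" by simp
  finally show ?thesis .
qed

lemma sum_primes_ln_div_le:
  "(\<Sum>p | prime p \<and> p \<le> n. ln (real p) / (real p * (real p - 1))) \<le> (\<Sum>k. 4 * real k powr (-3/2))"
proof -
  have "(\<Sum>p | prime p \<and> p \<le> n. ln (real p) / (real p * (real p - 1)))
      \<le> (\<Sum>p | prime p \<and> p \<le> n. 4 * real p powr (-3/2))"
    by (intro sum_mono ln_div_le_powr) (auto dest: prime_ge_2_nat)
  also have "\<dots> \<le> (\<Sum>k. 4 * real k powr (-3/2))"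
    by (intro sum_le_suminf summable_mult) (auto simp: summable_real_powr_iff)
  finally show ?thesis .
qed

lemma mertens_ge: "\<exists>C. \<forall>n \<ge> 1. ln (real n) - C \<le> mertens n"
proof (intro exI allI impI)
  fix n :: nat assume n: "n \<ge> 1"
  define c where "c = (\<Sum>k. 4 * real k powr (-3/2))"
  have "real n * ln (real n) - real n \<le> ln (fact n)" by (rule ln_fact_ge)
  also have "\<dots> = (\<Sum>p | prime p \<and> p \<le> n. ln (real p) * real (multiplicity p (fact n :: nat)))"
    by (simp add: ln_fact_eq_sum_multiplicity mult.commute)
  also have "\<dots> \<le> (\<Sum>p | prime p \<and> p \<le> n. ln (real p) * (real n / (real p - 1)))"
    by (intro sum_mono mult_left_mono multiplicity_fact_le) (auto dest: prime_ge_1_nat)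
  also have "\<dots> = real n * (mertens n + (\<Sum>p | prime p \<and> p \<le> n. ln (real p) / (real p * (real p - 1))))"
    unfolding mertens_def sum.distrib[symmetric] sum_distrib_left
    by (intro sum.cong refl) (auto simp: field_simps dest!: prime_ge_2_nat)
  also have "\<dots> \<le> real n * (mertens n + c)"
    unfolding c_def by (intro mult_left_mono add_left_mono sum_primes_ln_div_le) auto
  finally have "real n * (ln (real n) - 1) \<le> real n * (mertens n + c)"
    by (simp add: algebra_simps)
  then show "ln (real n) - (1 + c) \<le> mertens n"
    using n by (simp add: mult_le_cancel_left_pos)
qed

lemma mertens_bounded: "\<exists>C. \<forall>n \<ge> 1. \<bar>mertens n - ln (real n)\<bar> \<le> C"
proof -
  obtain C where "\<forall>n \<ge> 1. ln (real n) - C \<le> mertens n" using mertens_ge by blast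
  then have "\<bar>mertens n - ln (real n)\<bar> \<le> max C (ln 4)" if "n \<ge> 1" for n
    using mertens_le[OF that] that by (auto simp: abs_le_iff)
  then show ?thesis by blast
qed

lemma sum_primes_le_Suc:
  "(\<Sum>p | prime p \<and> p \<le> Suc n. f p) = (\<Sum>p | prime p \<and> p \<le> n. f p) + (if prime (Suc n) then f (Suc n) else 0)"
proof -
  have "{p. prime p \<and> p \<le> Suc n} = (if prime (Suc n) then insert (Suc n) else id) {p. prime p \<and> p \<le> n}"
    by (auto simp: le_Suc_eq)
  then show ?thesis by (simp add: add.commute)
qed

lemma sum_primes_between:
  fixes f :: "nat \<Rightarrow> 'a :: ab_group_add"
  assumes "m \<le> n"
  shows "(\<Sum>p | prime p \<and> m < p \<and> p \<le> n. f p) = (\<Sum>p | prime p \<and> p \<le> n. f p) - (\<Sum>p | prime p \<and> p \<le> m. f p)"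
proof -
  have "{p. prime p \<and> p \<le> n} = {p. prime p \<and> p \<le> m} \<union> {p. prime p \<and> m < p \<and> p \<le> n}"
    using assms by auto
  then have "(\<Sum>p | prime p \<and> p \<le> n. f p) = (\<Sum>p | prime p \<and> p \<le> m. f p) + (\<Sum>p | prime p \<and> m < p \<and> p \<le> n. f p)"
    by (simp only:) (rule sum.union_disjoint; auto)
  then show ?thesis by simp
qed

lemma sum_ln_sq_primes_summation_by_parts:
  assumes "n \<ge> 1"
  shows "(\<Sum>p | prime p \<and> p \<le> n. ln (real p) ^ 2 / real p)
    = ln (real n) * mertens n - (\<Sum>k\<in>{1..<n}. mertens k * (ln (real (Suc k)) - ln (real k)))"
  using assms
proof (induction n rule: dec_induct)
  case base
  have "{p::nat. prime p \<and> p \<le> 1} = {}" by (auto dest: prime_gt_1_nat)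
  then show ?case by (simp only: mertens_def) simp
next
  case (step n)
  have "mertens (Suc n) - mertens n = (if prime (Suc n) then ln (real (Suc n)) / real (Suc n) else 0)"
    unfolding mertens_def sum_primes_le_Suc by simp
  then have "(\<Sum>p | prime p \<and> p \<le> Suc n. ln (real p) ^ 2 / real p)
      = (\<Sum>p | prime p \<and> p \<le> n. ln (real p) ^ 2 / real p) + ln (real (Suc n)) * (mertens (Suc n) - mertens n)"
    by (simp add: sum_primes_le_Suc power2_eq_square)
  with step show ?case by (simp add: algebra_simps)
qed

lemma sum_ln_mult_diff_ln:
  assumes "n \<ge> 1"
  shows "(\<Sum>k\<in>{1..<n}. ln (real k) * (ln (real (Suc k)) - ln (real k)))
    = ln (real n) ^ 2 / 2 - (\<Sum>k\<in>{1..<n}. (ln (real (Suc k)) - ln (real k)) ^ 2) / 2"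
proof -
  have "(\<Sum>k\<in>{1..<n}. ln (real k) * (ln (real (Suc k)) - ln (real k)))
      = (\<Sum>k\<in>{1..<n}. ln (real (Suc k)) ^ 2 / 2 - ln (real k) ^ 2 / 2)
        - (\<Sum>k\<in>{1..<n}. (ln (real (Suc k)) - ln (real k)) ^ 2) / 2"
  proof -
    have "a * (b - a) = (b ^ 2 / 2 - a ^ 2 / 2) - (b - a) ^ 2 / 2" for a b :: real
      by (simp add: power2_eq_square field_simps)
    then show ?thesis by (simp only: sum_divide_distrib sum_subtractf[symmetric])
  qed
  also have "(\<Sum>k\<in>{1..<n}. ln (real (Suc k)) ^ 2 / 2 - ln (real k) ^ 2 / 2) = ln (real n) ^ 2 / 2"
    using assms by (subst sum_Suc_diff'[where f = "\<lambda>k. ln (real k) ^ 2 / 2"]) auto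
  finally show ?thesis .
qed

lemma ln_Suc_diff_bounds:
  assumes "k \<ge> 1"
  shows "0 \<le> ln (real (Suc k)) - ln (real k)" "ln (real (Suc k)) - ln (real k) \<le> 1"
proof -
  have "1 + 1 / real k = real (Suc k) / real k" using assms by (simp add: field_simps)
  then have eq: "ln (real (Suc k)) - ln (real k) = ln (1 + 1 / real k)"
    using assms by (simp add: ln_div)
  have "ln (1 + 1 / real k) \<le> 1 / real k" by (intro ln_add_one_self_le_self) simp
  also have "\<dots> \<le> 1" using assms by simp
  finally show "ln (real (Suc k)) - ln (real k) \<le> 1" by (simp only: eq)
  show "0 \<le> ln (real (Suc k)) - ln (real k)" unfolding eq by simp
qed

lemma sum_ln_sq_primes_remainder:
  assumes "n \<ge> 1"
  shows "(\<Sum>p | prime p \<and> p \<le> n. ln (real p) ^ 2 / real p) - ln (real n) ^ 2 / 2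
    = ln (real n) * (mertens n - ln (real n))
      - (\<Sum>k\<in>{1..<n}. (mertens k - ln (real k)) * (ln (real (Suc k)) - ln (real k)))
      + (\<Sum>k\<in>{1..<n}. (ln (real (Suc k)) - ln (real k)) ^ 2) / 2"
proof -
  have "(\<Sum>k\<in>{1..<n}. mertens k * (ln (real (Suc k)) - ln (real k)))
      = (\<Sum>k\<in>{1..<n}. (mertens k - ln (real k)) * (ln (real (Suc k)) - ln (real k)))
        + (\<Sum>k\<in>{1..<n}. ln (real k) * (ln (real (Suc k)) - ln (real k)))"
    by (simp add: algebra_simps flip: sum.distrib)
  moreover have "ln (real n) * (mertens n - ln (real n)) = ln (real n) * mertens n - ln (real n) ^ 2"
    by (simp add: power2_eq_square right_diff_distrib)
  ultimately show ?thesis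
    using sum_ln_sq_primes_summation_by_parts[OF assms] sum_ln_mult_diff_ln[OF assms] by linarith
qed

lemma sum_ln_sq_primes_approx:
  "\<exists>C. \<forall>n \<ge> 1. \<bar>(\<Sum>p | prime p \<and> p \<le> n. ln (real p) ^ 2 / real p) - ln (real n) ^ 2 / 2\<bar> \<le> C * ln (real n)"
proof -
  obtain C where C: "\<And>n. n \<ge> 1 \<Longrightarrow> \<bar>mertens n - ln (real n)\<bar> \<le> C"
    using mertens_bounded by blast
  define d where "d k = ln (real (Suc k)) - ln (real k)" for k
  have d: "0 \<le> d k" "d k \<le> 1" if "k \<ge> 1" for k
    using ln_Suc_diff_bounds[OF that] by (simp_all add: d_def)
  have "\<bar>(\<Sum>p | prime p \<and> p \<le> n. ln (real p) ^ 2 / real p) - ln (real n) ^ 2 / 2\<bar> \<le> (2 * C + 1) * ln (real n)"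
    if n: "n \<ge> 1" for n
  proof -
    have sum_d: "(\<Sum>k\<in>{1..<n}. d k) = ln (real n)"
      using n sum_Suc_diff'[of 1 n "\<lambda>k. ln (real k)"] by (simp add: d_def)
    have "\<bar>ln (real n) * (mertens n - ln (real n))\<bar> \<le> C * ln (real n)"
      using C[OF n] n by (simp add: abs_mult mult.commute[of C] mult_left_mono)
    moreover have "\<bar>\<Sum>k\<in>{1..<n}. (mertens k - ln (real k)) * d k\<bar> \<le> C * ln (real n)"
    proof -
      have "\<bar>\<Sum>k\<in>{1..<n}. (mertens k - ln (real k)) * d k\<bar> \<le> (\<Sum>k\<in>{1..<n}. C * d k)"
        using C d by (intro sum_abs[THEN order_trans] sum_mono) (simp add: abs_mult mult_right_mono)
      then show ?thesis using sum_d by (simp add: sum_distrib_left[symmetric])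
    qed
    moreover have "(\<Sum>k\<in>{1..<n}. d k ^ 2) \<le> (\<Sum>k\<in>{1..<n}. d k)"
      using d by (intro sum_mono) (simp add: power2_eq_square mult_left_le)
    moreover have "0 \<le> (\<Sum>k\<in>{1..<n}. d k ^ 2)" by (simp add: sum_nonneg)
    ultimately show ?thesis
      using sum_ln_sq_primes_remainder[OF n] unfolding sum_d d_def[symmetric]
      by (simp add: abs_le_iff algebra_simps)
  qed
  then show ?thesis by blast
qed

section \<open>The moments of ln Utilde\<close>

lemma ln_Utilde:
  assumes "k \<ge> 1"
  shows "ln (real (Utilde n m k)) = (\<Sum>p | prime p \<and> m < p \<and> p \<le> n. if p dvd k then ln (real p) else 0)"
proof -
  have "multiplicity p k \<ge> 1 \<longleftrightarrow> p dvd k" if "prime p" for p :: nat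
    using that assms prime_multiplicity_gt_zero_iff[of p k] by auto
  moreover have "finite {p. prime p \<and> m < p \<and> p \<le> n}" by simp
  ultimately show ?thesis
    unfolding Utilde_def of_nat_prod
    by (subst ln_prod) (auto intro!: sum.cong simp: prime_gt_0_nat)
qed

lemma power2_sum_orthogonal:
  fixes a :: "'a \<Rightarrow> 'b :: comm_ring_1"
  assumes "finite A" "\<And>x y. x \<in> A \<Longrightarrow> y \<in> A \<Longrightarrow> x \<noteq> y \<Longrightarrow> a x * a y = 0"
  shows "(\<Sum>x\<in>A. a x) ^ 2 = (\<Sum>x\<in>A. a x ^ 2)"
proof -
  have "(\<Sum>y\<in>A. a x * a y) = a x ^ 2" if "x \<in> A" for x
    using assms that by (subst sum.remove[of A x]) (auto simp: power2_eq_square intro: sum.neutral)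
  then show ?thesis by (simp add: power2_eq_square sum_product)
qed

lemma ln_Utilde_sq:
  assumes "k \<in> {1..n}" "n < m * m"
  shows "ln (real (Utilde n m k)) ^ 2 = (\<Sum>p | prime p \<and> m < p \<and> p \<le> n. if p dvd k then ln (real p) ^ 2 else 0)"
proof -
  have "\<not> (p dvd k \<and> q dvd k)" if "prime p" "prime q" "p \<noteq> q" "m < p" "m < q" for p q
  proof
    assume "p dvd k \<and> q dvd k"
    then have "p * q dvd k" using that by (simp add: divides_mult primes_coprime)
    then have "p * q \<le> k" using assms by (intro dvd_imp_le) auto
    moreover have "m * m < p * q" using that by (intro mult_strict_mono) auto
    ultimately show False using assms by simp
  qed
  then have "(\<Sum>p | prime p \<and> m < p \<and> p \<le> n. if p dvd k then ln (real p) else 0) ^ 2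
      = (\<Sum>p | prime p \<and> m < p \<and> p \<le> n. (if p dvd k then ln (real p) else 0) ^ 2)"
    by (intro power2_sum_orthogonal) auto
  then show ?thesis
    using assms by (simp add: ln_Utilde if_distrib[of "\<lambda>x. x ^ 2"] cong: if_cong)
qed

lemma sum_atLeastAtMost_sum_if_dvd:
  assumes "finite Q" "0 \<notin> Q"
  shows "(\<Sum>k\<in>{1..n}. \<Sum>p\<in>Q. if p dvd k then g p else 0) = (\<Sum>p\<in>Q. of_nat (n div p) * (g p :: 'a :: comm_semiring_1))"
  using assms by (subst sum.swap) (intro sum.cong refl sum_if_dvd_atLeastAtMost; auto intro: gr0I)

lemma variance_ln_Utilde:
  assumes "1 \<le> n" "n < m * m"
  defines "Q \<equiv> {p. prime p \<and> m < p \<and> p \<le> n}"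
  shows "measure_pmf.variance (pmf_of_set {1..n}) (\<lambda>k. ln (real (Utilde n m k)))
       = (\<Sum>p\<in>Q. real (n div p) * ln (real p) ^ 2) / real n
         - ((\<Sum>p\<in>Q. real (n div p) * ln (real p)) / real n) ^ 2"
proof -
  let ?M = "pmf_of_set {1..n}" and ?f = "\<lambda>k. ln (real (Utilde n m k))"
  have Q: "finite Q" "0 \<notin> Q" by (auto simp: Q_def)
  have "measure_pmf.variance ?M ?f = measure_pmf.expectation ?M (\<lambda>k. ?f k ^ 2) - (measure_pmf.expectation ?M ?f) ^ 2"
    using assms(1) by (intro measure_pmf.variance_eq integrable_measure_pmf_finite) simp_all
  moreover have "measure_pmf.expectation ?M ?f = (\<Sum>k\<in>{1..n}. \<Sum>p\<in>Q. if p dvd k then ln (real p) else 0) / real n"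
    using assms by (simp add: integral_pmf_of_set Q_def ln_Utilde)
  moreover have "measure_pmf.expectation ?M (\<lambda>k. ?f k ^ 2) = (\<Sum>k\<in>{1..n}. \<Sum>p\<in>Q. if p dvd k then ln (real p) ^ 2 else 0) / real n"
    using assms by (simp add: integral_pmf_of_set Q_def ln_Utilde_sq)
  ultimately show ?thesis
    by (simp only: sum_atLeastAtMost_sum_if_dvd[OF Q])
qed

section \<open>Asymptotics of the variance\<close>

lemma sum_floor_div_approx:
  fixes g :: "nat \<Rightarrow> real"
  assumes "finite Q" "\<And>p. p \<in> Q \<Longrightarrow> g p \<ge> 0" "n \<ge> 1"
  shows "\<bar>(\<Sum>p\<in>Q. real (n div p) * g p) / real n - (\<Sum>p\<in>Q. g p / real p)\<bar> \<le> (\<Sum>p\<in>Q. g p) / real n"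
proof -
  have "\<bar>real (n div p) / real n - 1 / real p\<bar> \<le> 1 / real n" for p
  proof -
    have "\<bar>real (n div p) - real n / real p\<bar> \<le> 1"
      using real_div_minus_one_le[of n p] of_nat_div_le_of_nat[of n p, where 'a = real] by linarith
    moreover have "real (n div p) / real n - 1 / real p = (real (n div p) - real n / real p) / real n"
      using assms(3) by (simp add: diff_divide_distrib)
    ultimately show ?thesis by (simp add: divide_right_mono)
  qed
  then have "\<bar>g p * (real (n div p) / real n - 1 / real p)\<bar> \<le> g p / real n" if "p \<in> Q" for p
    using assms(2)[OF that] by (simp add: abs_mult mult_left_mono divide_inverse)
  then have "\<bar>\<Sum>p\<in>Q. g p * (real (n div p) / real n - 1 / real p)\<bar> \<le> (\<Sum>p\<in>Q. g p / real n)"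
    by (intro sum_abs[THEN order_trans] sum_mono) auto
  then show ?thesis
    by (simp add: sum_divide_distrib sum_subtractf right_diff_distrib mult.commute)
qed

lemma sum_primes_between_ln_le:
  "(\<Sum>p | prime p \<and> m < p \<and> p \<le> n. ln (real p)) \<le> ln 4 * real n"
  by (rule order_trans[OF sum_mono2 sum_ln_primes_le]) (auto dest: prime_ge_1_nat)

lemma sum_primes_between_ln_approx:
  "\<exists>C. \<forall>m n. 1 \<le> m \<longrightarrow> m \<le> n \<longrightarrow>
    \<bar>(\<Sum>p | prime p \<and> m < p \<and> p \<le> n. real (n div p) * ln (real p)) / real n - (ln (real n) - ln (real m))\<bar> \<le> C"
proof -
  obtain C where C: "\<And>n. n \<ge> 1 \<Longrightarrow> \<bar>mertens n - ln (real n)\<bar> \<le> C"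
    using mertens_bounded by blast
  have "\<bar>(\<Sum>p | prime p \<and> m < p \<and> p \<le> n. real (n div p) * ln (real p)) / real n - (ln (real n) - ln (real m))\<bar>
      \<le> ln 4 + 2 * C" if "1 \<le> m" "m \<le> n" for m n
  proof -
    have "\<bar>(\<Sum>p | prime p \<and> m < p \<and> p \<le> n. real (n div p) * ln (real p)) / real n
        - (\<Sum>p | prime p \<and> m < p \<and> p \<le> n. ln (real p) / real p)\<bar>
        \<le> (\<Sum>p | prime p \<and> m < p \<and> p \<le> n. ln (real p)) / real n"
      using that by (intro sum_floor_div_approx) (auto dest: prime_ge_1_nat)
    also have "\<dots> \<le> ln 4"
      using sum_primes_between_ln_le[of m n] that by (simp add: divide_le_eq mult.commute)
    finally show ?thesis
      using C[OF that(1)] C[OF order_trans[OF that]] that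
      by (simp add: sum_primes_between mertens_def abs_le_iff)
  qed
  then show ?thesis by blast
qed

lemma sum_primes_between_ln_sq_approx:
  "\<exists>C. \<forall>m n. 1 \<le> m \<longrightarrow> m \<le> n \<longrightarrow>
    \<bar>(\<Sum>p | prime p \<and> m < p \<and> p \<le> n. real (n div p) * ln (real p) ^ 2) / real n
      - (ln (real n) ^ 2 - ln (real m) ^ 2) / 2\<bar> \<le> C * ln (real n)"
proof -
  obtain C where C: "\<And>n. n \<ge> 1 \<Longrightarrow>
      \<bar>(\<Sum>p | prime p \<and> p \<le> n. ln (real p) ^ 2 / real p) - ln (real n) ^ 2 / 2\<bar> \<le> C * ln (real n)"
    using sum_ln_sq_primes_approx by blast
  have "\<bar>(\<Sum>p | prime p \<and> m < p \<and> p \<le> n. real (n div p) * ln (real p) ^ 2) / real n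
      - (ln (real n) ^ 2 - ln (real m) ^ 2) / 2\<bar> \<le> (ln 4 + 2 * max C 0) * ln (real n)"
    if "1 \<le> m" "m \<le> n" for m n
  proof -
    have "(\<Sum>p | prime p \<and> m < p \<and> p \<le> n. ln (real p) ^ 2)
        \<le> (\<Sum>p | prime p \<and> m < p \<and> p \<le> n. ln (real n) * ln (real p))"
      by (intro sum_mono) (auto simp: power2_eq_square intro!: mult_right_mono dest: prime_ge_1_nat)
    also have "\<dots> \<le> ln (real n) * (ln 4 * real n)"
      using that by (simp add: sum_distrib_left[symmetric] sum_primes_between_ln_le mult_left_mono)
    finally have "(\<Sum>p | prime p \<and> m < p \<and> p \<le> n. ln (real p) ^ 2) / real n \<le> ln 4 * ln (real n)"
      using that by (simp add: divide_le_eq mult_ac)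
    then have "\<bar>(\<Sum>p | prime p \<and> m < p \<and> p \<le> n. real (n div p) * ln (real p) ^ 2) / real n
        - (\<Sum>p | prime p \<and> m < p \<and> p \<le> n. ln (real p) ^ 2 / real p)\<bar> \<le> ln 4 * ln (real n)"
      using that by (intro sum_floor_div_approx[THEN order_trans]) auto
    moreover have "C * ln (real m) \<le> max C 0 * ln (real n)" "C * ln (real n) \<le> max C 0 * ln (real n)"
      using that by (auto intro!: mult_mono)
    moreover have "(\<Sum>p | prime p \<and> m < p \<and> p \<le> n. ln (real p) ^ 2 / real p)
        = (\<Sum>p | prime p \<and> p \<le> n. ln (real p) ^ 2 / real p) - (\<Sum>p | prime p \<and> p \<le> m. ln (real p) ^ 2 / real p)"
      using that by (intro sum_primes_between)
    moreover have "(ln 4 + 2 * max C 0) * ln (real n) = ln 4 * ln (real n) + 2 * (max C 0 * ln (real n))"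
      by (simp add: algebra_simps)
    ultimately show ?thesis
      using C[OF that(1)] C[OF order_trans[OF that]] unfolding abs_le_iff by argo
  qed
  then show ?thesis by blast
qed

lemma variance_error_arith:
  fixes L l E1 E2 c1 c2 :: real
  assumes "0 \<le> l" "l \<le> L" "1 \<le> L"
    and "\<bar>E1 - (L - l)\<bar> \<le> c1" "\<bar>E2 - (L ^ 2 - l ^ 2) / 2\<bar> \<le> c2 * L"
  shows "\<bar>(E2 - E1 ^ 2) - (1/2) * (L - l) * (3 * l - L)\<bar> \<le> (c2 + 2 * c1 + c1 ^ 2) * L"
proof -
  define e1 where "e1 = E1 - (L - l)"
  have "(E2 - E1 ^ 2) - (1/2) * (L - l) * (3 * l - L) = (E2 - (L ^ 2 - l ^ 2) / 2) - e1 * (e1 + 2 * (L - l))"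
    by (simp add: e1_def power2_eq_square field_simps)
  also have "\<bar>\<dots>\<bar> \<le> c2 * L + c1 * (c1 + 2 * L)"
  proof -
    have "\<bar>e1 * (e1 + 2 * (L - l))\<bar> \<le> c1 * (c1 + 2 * L)"
      unfolding abs_mult using assms by (intro mult_mono) (auto simp: e1_def)
    then show ?thesis using assms(5) by (simp add: abs_le_iff)
  qed
  also have "\<dots> \<le> (c2 + 2 * c1 + c1 ^ 2) * L"
    using assms mult_left_mono[OF assms(3), of "c1 ^ 2"] by (simp add: power2_eq_square algebra_simps)
  finally show ?thesis .
qed

lemma relative_error_arith:
  fixes V L l K :: real
  assumes "0 \<le> l" "l < L" "L < 2 * l" "\<bar>V - (1/2) * (L - l) * (3 * l - L)\<bar> \<le> K * L"
  shows "\<bar>V / ((1/2) * (L - l) * (3 * l - L)) - 1\<bar> \<le> 4 * K / (L - l)"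
proof -
  define g where "g = (1/2) * (L - l) * (3 * l - L)"
  have "(L - l) * (L / 4) \<le> (L - l) * ((3 * l - L) / 2)"
    using assms by (intro mult_left_mono) auto
  then have g: "(L - l) * L / 4 \<le> g" "(L - l) * L / 4 > 0"
    using assms by (simp_all add: g_def)
  have "V / g - 1 = (V - g) / g" using g by (simp add: field_simps)
  then have "\<bar>V / g - 1\<bar> = \<bar>V - g\<bar> / g" using g by simp
  also have "\<dots> \<le> K * L / ((L - l) * L / 4)"
    using g assms(4) by (intro frac_le) (auto simp: g_def)
  also have "\<dots> = 4 * K / (L - l)" using assms by (simp add: field_simps)
  finally show ?thesis by (simp add: g_def)
qed

lemma ln_bounds_of_sqrt_lt_lt:
  assumes "1 \<le> m" "m < n" "n < m * m"
  shows "1 \<le> ln (real n)" "0 \<le> ln (real m)" "ln (real m) < ln (real n)" "ln (real n) < 2 * ln (real m)"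
proof -
  have "m \<ge> 2" using assms by (cases "m = 1") auto
  then have "ln (exp 1) \<le> ln (real n)" using assms exp_le by (intro ln_mono) auto
  then show "1 \<le> ln (real n)" by simp
  show "0 \<le> ln (real m)" "ln (real m) < ln (real n)" using assms by simp_all
  have "ln (real n) < ln (real m ^ 2)"
    using assms by (simp add: power2_eq_square flip: of_nat_mult)
  then show "ln (real n) < 2 * ln (real m)" by (simp add: ln_realpow)
qed

lemma variance_ln_Utilde_error:
  "\<exists>C. \<forall>m n. 1 \<le> m \<longrightarrow> m < n \<longrightarrow> n < m * m \<longrightarrow>
    \<bar>measure_pmf.variance (pmf_of_set {1..n}) (\<lambda>k. ln (real (Utilde n m k)))
      - (1/2) * (ln (real n) - ln (real m)) * (3 * ln (real m) - ln (real n))\<bar> \<le> C * ln (real n)"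
proof -
  obtain c1 where c1: "\<And>m n. 1 \<le> m \<Longrightarrow> m \<le> n \<Longrightarrow>
      \<bar>(\<Sum>p | prime p \<and> m < p \<and> p \<le> n. real (n div p) * ln (real p)) / real n - (ln (real n) - ln (real m))\<bar> \<le> c1"
    using sum_primes_between_ln_approx by blast
  obtain c2 where c2: "\<And>m n. 1 \<le> m \<Longrightarrow> m \<le> n \<Longrightarrow>
      \<bar>(\<Sum>p | prime p \<and> m < p \<and> p \<le> n. real (n div p) * ln (real p) ^ 2) / real n
        - (ln (real n) ^ 2 - ln (real m) ^ 2) / 2\<bar> \<le> c2 * ln (real n)"
    using sum_primes_between_ln_sq_approx by blast
  have "\<bar>measure_pmf.variance (pmf_of_set {1..n}) (\<lambda>k. ln (real (Utilde n m k)))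
      - (1/2) * (ln (real n) - ln (real m)) * (3 * ln (real m) - ln (real n))\<bar>
    \<le> (c2 + 2 * c1 + c1 ^ 2) * ln (real n)" if mn: "1 \<le> m" "m < n" "n < m * m" for m n
  proof -
    define E1 where "E1 = (\<Sum>p | prime p \<and> m < p \<and> p \<le> n. real (n div p) * ln (real p)) / real n"
    define E2 where "E2 = (\<Sum>p | prime p \<and> m < p \<and> p \<le> n. real (n div p) * ln (real p) ^ 2) / real n"
    have "measure_pmf.variance (pmf_of_set {1..n}) (\<lambda>k. ln (real (Utilde n m k))) = E2 - E1 ^ 2"
      unfolding E1_def E2_def using mn by (intro variance_ln_Utilde) auto
    moreover have "\<bar>(E2 - E1 ^ 2) - (1/2) * (ln (real n) - ln (real m)) * (3 * ln (real m) - ln (real n))\<bar>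
        \<le> (c2 + 2 * c1 + c1 ^ 2) * ln (real n)"
      using c1[of m n] c2[of m n] mn ln_bounds_of_sqrt_lt_lt[OF mn]
      by (intro variance_error_arith) (auto simp: E1_def E2_def)
    ultimately show ?thesis by simp
  qed
  then show ?thesis by blast
qed

lemma variance_ln_Utilde_relative_error:
  "\<exists>C. \<forall>m n. 1 \<le> m \<longrightarrow> m < n \<longrightarrow> n < m * m \<longrightarrow>
    \<bar>measure_pmf.variance (pmf_of_set {1..n}) (\<lambda>k. ln (real (Utilde n m k)))
      / ((1/2) * (ln (real n) - ln (real m)) * (3 * ln (real m) - ln (real n))) - 1\<bar>
    \<le> C / (ln (real n) - ln (real m))"
proof -
  obtain C where "\<forall>m n. 1 \<le> m \<longrightarrow> m < n \<longrightarrow> n < m * m \<longrightarrow>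
      \<bar>measure_pmf.variance (pmf_of_set {1..n}) (\<lambda>k. ln (real (Utilde n m k)))
        - (1/2) * (ln (real n) - ln (real m)) * (3 * ln (real m) - ln (real n))\<bar> \<le> C * ln (real n)"
    using variance_ln_Utilde_error by blast
  then have "\<forall>m n. 1 \<le> m \<longrightarrow> m < n \<longrightarrow> n < m * m \<longrightarrow>
    \<bar>measure_pmf.variance (pmf_of_set {1..n}) (\<lambda>k. ln (real (Utilde n m k)))
      / ((1/2) * (ln (real n) - ln (real m)) * (3 * ln (real m) - ln (real n))) - 1\<bar>
    \<le> 4 * C / (ln (real n) - ln (real m))"
    using ln_bounds_of_sqrt_lt_lt by (blast intro: relative_error_arith)
  then show ?thesis by blast
qed

lemma eventually_in_Utilde_range:
  fixes m :: "nat \<Rightarrow> nat"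
  assumes "\<forall>\<^sub>F n in at_top. real (m n) > sqrt (real n)"
    and "(\<lambda>n. real (m n) / real n) \<longlonglongrightarrow> 0"
  shows "\<forall>\<^sub>F n in at_top. 1 \<le> m n \<and> m n < n \<and> n < m n * m n"
proof -
  have "\<forall>\<^sub>F n in at_top. real (m n) / real n < 1"
    using assms(2) by (rule order_tendstoD) simp
  with assms(1) eventually_gt_at_top[of 0] show ?thesis
  proof eventually_elim
    case (elim n)
    have "0 \<le> sqrt (real n)" by simp
    then have "sqrt (real n) ^ 2 < real (m n) ^ 2"
      using elim by (intro power_strict_mono) auto
    then have "real n < real (m n * m n)" by (simp add: power2_eq_square)
    moreover have "m n > 0" using elim \<open>0 \<le> sqrt (real n)\<close> by linarith
    ultimately show ?case using elim by (auto simp: divide_less_eq split: if_splits simp del: of_nat_mult)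
  qed
qed

lemma filterlim_ln_diff_at_top:
  fixes m :: "nat \<Rightarrow> nat"
  assumes "\<forall>\<^sub>F n in at_top. m n > 0"
    and "(\<lambda>n. real (m n) / real n) \<longlonglongrightarrow> 0"
  shows "filterlim (\<lambda>n. ln (real n) - ln (real (m n))) at_top at_top"
proof -
  have pos: "\<forall>\<^sub>F n in at_top. real (m n) / real n > 0"
    using assms(1) eventually_gt_at_top[of 0] by eventually_elim simp
  have "filterlim (\<lambda>n. ln (real (m n) / real n)) at_bot at_top"
    using ln_at_0 tendsto_imp_filterlim_at_right[OF assms(2) pos] by (rule filterlim_compose)
  then have "filterlim (\<lambda>n. - ln (real (m n) / real n)) at_top at_top"
    by (simp add: filterlim_uminus_at_top)
  moreover have "\<forall>\<^sub>F n in at_top. - ln (real (m n) / real n) = ln (real n) - ln (real (m n))"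
    using pos by eventually_elim (auto simp: ln_div zero_less_divide_iff)
  ultimately show ?thesis by (simp only: filterlim_cong[OF refl refl])
qed

theorem theorem5p5:
  fixes m :: "nat \<Rightarrow> nat"
  assumes "\<forall>\<^sub>F n in at_top. real (m n) > sqrt (real n)"
    and "(\<lambda>n. real (m n) / real n) \<longlonglongrightarrow> 0"
  shows "(\<lambda>n. measure_pmf.variance (pmf_of_set {1..n})
             (\<lambda>k. ln (real (Utilde n (m n) k))))
         \<sim>[at_top] (\<lambda>n. (1/2) * (ln (real n) - ln (real (m n)))
                          * (3 * ln (real (m n)) - ln (real n)))"
    (is "?V \<sim>[at_top] ?g")
proof -
  obtain C where C: "\<And>m n. 1 \<le> m \<Longrightarrow> m < n \<Longrightarrow> n < m * m \<Longrightarrow>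
      \<bar>measure_pmf.variance (pmf_of_set {1..n}) (\<lambda>k. ln (real (Utilde n m k)))
        / ((1/2) * (ln (real n) - ln (real m)) * (3 * ln (real m) - ln (real n))) - 1\<bar>
      \<le> C / (ln (real n) - ln (real m))"
    using variance_ln_Utilde_relative_error by blast
  have range: "\<forall>\<^sub>F n in at_top. 1 \<le> m n \<and> m n < n \<and> n < m n * m n"
    using assms by (rule eventually_in_Utilde_range)
  then have "\<forall>\<^sub>F n in at_top. norm (?V n / ?g n - 1) \<le> C / (ln (real n) - ln (real (m n)))"
    by eventually_elim (unfold real_norm_def, rule C, auto)
  moreover have "filterlim (\<lambda>n. ln (real n) - ln (real (m n))) at_top at_top"
    using eventually_mono[OF range] assms(2) by (intro filterlim_ln_diff_at_top) auto
  then have "(\<lambda>n. C / (ln (real n) - ln (real (m n)))) \<longlonglongrightarrow> 0"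
    by (intro tendsto_divide_0[OF tendsto_const] filterlim_at_top_imp_at_infinity)
  ultimately have "(\<lambda>n. ?V n / ?g n - 1) \<longlonglongrightarrow> 0"
    by (rule Lim_null_comparison)
  then show ?thesis by (rule asymp_equivI'[OF LIM_zero_cancel])
qed

end
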